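(* Let $A \in \mathbb{R}^{m \times r}$, let $C = \{ x \in \mathbb{R}^r \mid Ax \ge 0\}$, and let $\tilde C = \{ (x, Ax) \in \mathbb{R}^{r+m} \mid Ax \ge 0\}$. Then for every nonzero $x \in C$: $x$ is conformally non-decomposable in $C$ if and only if $(x, Ax)$ is conformally non-decomposable in $\tilde C$.
   Context: For $x \in \mathbb{R}^n$, $\operatorname{sign}(x) \in \{-,0,+\}^n$ is obtained by applying the sign function componentwise; the relations $0<-$, $0<+$ induce a componentwise partial order on $\{-,0,+\}^n$ ($-$ and $+$ incomparable). For a convex cone $K$, a nonzero $x \in K$ is conformally non-decomposable in $K$ if for all nonzero $x^1,x^2 \in K$ with $\operatorname{sign}(x^1),\operatorname{sign}(x^2) \le \operatorname{sign}(x)$, $x = x^1 + x^2$ implies $x^1 = \lambda x^2$ for some $\lambda > 0$. *)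

theory Defs
  imports "HOL-Analysis.Analysis"
begin

datatype sgn3 = Neg | Zero | Pos

definition sgn3_of :: "real \<Rightarrow> sgn3" where
  "sgn3_of t = (if t < 0 then Neg else if t = 0 then Zero else Pos)"

definition sign_vec :: "real ^ 'n \<Rightarrow> 'n \<Rightarrow> sgn3" where
  "sign_vec x = (\<lambda>i. sgn3_of (x $ i))"

definition sign_le :: "('n \<Rightarrow> sgn3) \<Rightarrow> ('n \<Rightarrow> sgn3) \<Rightarrow> bool" where
  "sign_le s t \<longleftrightarrow> (\<forall>i. s i = Zero \<or> s i = t i)"

definition conf_nondecomp :: "(real ^ 'n) set \<Rightarrow> real ^ 'n \<Rightarrow> bool" where
  "conf_nondecomp K x \<longleftrightarrow> x \<in> K \<and> x \<noteq> 0 \<and>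
     (\<forall>x1 x2. x1 \<in> K \<longrightarrow> x2 \<in> K \<longrightarrow> x1 \<noteq> 0 \<longrightarrow> x2 \<noteq> 0 \<longrightarrow>
        sign_le (sign_vec x1) (sign_vec x) \<longrightarrow> sign_le (sign_vec x2) (sign_vec x) \<longrightarrow>
        x = x1 + x2 \<longrightarrow> (\<exists>c>0. x1 = c *\<^sub>R x2))"

definition coneC :: "real ^ 'r ^ 'm \<Rightarrow> (real ^ 'r) set" where
  "coneC A = {x. \<forall>i. (A *v x) $ i \<ge> 0}"

definition lift :: "real ^ 'r ^ 'm \<Rightarrow> real ^ 'r \<Rightarrow> real ^ ('r + 'm)" where
  "lift A x = (\<chi> i. case i of Inl j \<Rightarrow> x $ j | Inr k \<Rightarrow> (A *v x) $ k)"

definition coneCt :: "real ^ 'r ^ 'm \<Rightarrow> (real ^ ('r + 'm)) set" where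
  "coneCt A = {lift A x | x. \<forall>i. (A *v x) $ i \<ge> 0}"

end

theory Submission
  imports Defs
begin

text \<open>Conformal non-decomposability is defined by the cone's linear structure and by the
  sign order, so it is transported along any injective linear map that reflects the sign
  order on the summands of conic decompositions. The map \<open>x \<mapsto> (x, Ax)\<close> is such a map:
  it is injective because it keeps \<open>x\<close>, and on the extra coordinates the order is automatic,
  since for \<open>x = x\<^sub>1 + x\<^sub>2\<close> in \<open>C\<close> the entries of \<open>Ax\<^sub>1\<close> and \<open>Ax\<^sub>2\<close> are non-negative, so each
  nonzero entry of \<open>Ax\<^sub>1\<close> is positive and remains so in \<open>Ax\<close>.\<close>

lemma sign_le_sign_vec_add_nonneg:
  fixes u v :: "real ^ 'n"
  assumes "\<And>i. u $ i \<ge> 0" and "\<And>i. v $ i \<ge> 0"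
  shows "sign_le (sign_vec u) (sign_vec (u + v))"
  unfolding sign_le_def sign_vec_def sgn3_of_def
  using assms by (smt (verit) vector_add_component)

lemma conf_nondecomp_linear_image:
  fixes f :: "real ^ 'n \<Rightarrow> real ^ 'k"
  assumes "linear f" and "inj f"
    and sign_reflect: "\<And>y z. y \<in> K \<Longrightarrow> z \<in> K \<Longrightarrow>
      sign_le (sign_vec (f y)) (sign_vec (f (y + z))) \<longleftrightarrow> sign_le (sign_vec y) (sign_vec (y + z))"
  shows "conf_nondecomp (f ` K) (f x) \<longleftrightarrow> conf_nondecomp K x"
proof -
  have zero_iff: "f y = 0 \<longleftrightarrow> y = 0" for y
    using \<open>linear f\<close> \<open>inj f\<close> linear_0 linear_injective_0 by metis
  have add_iff: "f x = f x\<^sub>1 + f x\<^sub>2 \<longleftrightarrow> x = x\<^sub>1 + x\<^sub>2" for x\<^sub>1 x\<^sub>2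
    using \<open>linear f\<close> \<open>inj f\<close> by (metis injD linear_add)
  have scale_iff: "f x\<^sub>1 = c *\<^sub>R f x\<^sub>2 \<longleftrightarrow> x\<^sub>1 = c *\<^sub>R x\<^sub>2" for x\<^sub>1 x\<^sub>2 c
    using \<open>linear f\<close> \<open>inj f\<close> by (metis injD linear_scale)
  have sign_iff:
    "sign_le (sign_vec (f x\<^sub>1)) (sign_vec (f x\<^sub>1 + f x\<^sub>2)) \<longleftrightarrow> sign_le (sign_vec x\<^sub>1) (sign_vec (x\<^sub>1 + x\<^sub>2))"
    "sign_le (sign_vec (f x\<^sub>2)) (sign_vec (f x\<^sub>1 + f x\<^sub>2)) \<longleftrightarrow> sign_le (sign_vec x\<^sub>2) (sign_vec (x\<^sub>1 + x\<^sub>2))"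
    if "x\<^sub>1 \<in> K" "x\<^sub>2 \<in> K" for x\<^sub>1 x\<^sub>2
    using that sign_reflect[of x\<^sub>1 x\<^sub>2] sign_reflect[of x\<^sub>2 x\<^sub>1] \<open>linear f\<close>
    by (simp_all add: linear_add add.commute)
  have forall_image: "(\<forall>y\<^sub>1 y\<^sub>2. y\<^sub>1 \<in> f ` K \<longrightarrow> y\<^sub>2 \<in> f ` K \<longrightarrow> Q y\<^sub>1 y\<^sub>2) \<longleftrightarrow>
      (\<forall>x\<^sub>1 x\<^sub>2. x\<^sub>1 \<in> K \<longrightarrow> x\<^sub>2 \<in> K \<longrightarrow> Q (f x\<^sub>1) (f x\<^sub>2))" for Q
    by blast
  show ?thesis
    unfolding conf_nondecomp_def forall_image
    by (auto simp: inj_image_mem_iff[OF \<open>inj f\<close>] zero_iff add_iff scale_iff sign_iff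
        linear_add[OF \<open>linear f\<close>])
qed

lemma linear_lift: "linear (lift A)"
  by (rule linearI) (auto simp: lift_def vec_eq_iff matrix_vector_right_distrib
      matrix_vector_mult_scaleR split: sum.split)

lemma inj_lift: "inj (lift A)"
  by (rule injI) (metis lift_def vec_eq_iff vec_lambda_beta sum.simps(5))

lemma coneCt_eq_image: "coneCt A = lift A ` coneC A"
  by (auto simp: coneCt_def coneC_def)

lemma sign_le_lift_iff:
  "sign_le (sign_vec (lift A y)) (sign_vec (lift A w)) \<longleftrightarrow>
     sign_le (sign_vec y) (sign_vec w) \<and> sign_le (sign_vec (A *v y)) (sign_vec (A *v w))"
  by (auto simp: sign_le_def sign_vec_def lift_def split: sum.split)

theorem lemma2:
  fixes A :: "real ^ 'r ^ 'm" and x :: "real ^ 'r"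
  assumes "x \<in> coneC A" and "x \<noteq> 0"
  shows "conf_nondecomp (coneC A) x \<longleftrightarrow> conf_nondecomp (coneCt A) (lift A x)"
proof -
  have "sign_le (sign_vec (lift A y)) (sign_vec (lift A (y + z))) \<longleftrightarrow>
      sign_le (sign_vec y) (sign_vec (y + z))" if "y \<in> coneC A" "z \<in> coneC A" for y z
    using that sign_le_sign_vec_add_nonneg[of "A *v y" "A *v z"]
    by (simp add: sign_le_lift_iff coneC_def matrix_vector_right_distrib)
  then show ?thesis
    unfolding coneCt_eq_image using conf_nondecomp_linear_image[OF linear_lift inj_lift] by metis
qed

end
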